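(* In the additive noise ordinal optimisation model (see context), with $n\in\mathbb{N}$, $m\in\{1,\dots,n\}$ and $\alpha\in(0,1)$, $$p^{\mathrm{A}}_{\mathrm{success}}(n,m,\alpha)=1-(1-\alpha)^n-\sum_{g=1}^{n-m}\binom{n}{g}\alpha^g(1-\alpha)^{n-g}\int_{-\infty}^{\infty}F_{Z_{\{g+m\}}}(z)\,f_{Z_{\{1\}},g}(z)\,dz,$$ where $$F_{Z_{\{g+m\}}}(z)=\sum_{j=0}^{n-g-m}\binom{n-g}{j}\big[1-F_{\overline Z}(z)\big]^j\big[F_{\overline Z}(z)\big]^{n-g-j},\qquad F_{\overline Z}(z)=\int_{x^*_\alpha}^{\infty}F_Y(z-x)f_{\overline X}(x)\,dx,$$ $$f_{\overline X}(x)=\begin{cases}f_X(x)/(1-\alpha),& x\ge x^*_\alpha\\ 0,& x<x^*_\alpha\end{cases},$$ and $$f_{Z_{\{1\}},g}(z)=g\big[1-F_{\underline Z}(z)\big]^{g-1}f_{\underline Z}(z),\quad F_{\underline Z}(z)=\int_{-\infty}^{x^*_\alpha}F_Y(z-x)f_{\underline X}(x)\,dx,\quad f_{\underline Z}(z)=\int_{-\infty}^{x^*_\alpha}f_Y(z-x)f_{\underline X}(x)\,dx,$$ $$f_{\underline X}(x)=\begin{cases}f_X(x)/\alpha,& x\le x^*_\alpha\\ 0,& x>x^*_\alpha\end{cases}.$$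
   Context: Ordinal optimisation model: let $(Z_1,X_1),\dots,(Z_n,X_n)$ be i.i.d. copies of a pair $(Z,X)$ of real random variables. Order $Z_1,\dots,Z_n$ increasingly as $Z_{1:n}\le\dots\le Z_{n:n}$ and, for $i=1,\dots,m$, let $X_{\langle i\rangle}$ denote the $X$-value paired with $Z_{i:n}$. Let $x^*_\alpha$ be the $\alpha$-quantile of $X$, i.e. $F_X(x^*_\alpha)=\alpha$. The success probability is $p_{\mathrm{success}}(n,m,\alpha)=\Pr(\min_{1\le i\le m}X_{\langle i\rangle}\le x^*_\alpha)$. Additive noise model: $Z_i=X_i+Y_i$ with $X_i,Y_i$ independent continuous random variables, $X_i$ having PDF $f_X$ and CDF $F_X$, $Y_i$ having PDF $f_Y$ and CDF $F_Y$ (i.i.d. over $i$); the success probability is then denoted $p^{\mathrm{A}}_{\mathrm{success}}(n,m,\alpha)$. *)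

theory Defs
  imports "HOL-Probability.Probability"
begin

text \<open>Ordinal optimisation: the m designs with the smallest observed values Z are selected.
  The rank of design i is the number of designs with strictly smaller Z; since the Z's are
  continuous they are almost surely distinct, so the designs with rank < m are exactly those
  paired with Z_{1:n},...,Z_{m:n}.\<close>

definition ord_rank :: "nat \<Rightarrow> (nat \<Rightarrow> real) \<Rightarrow> nat \<Rightarrow> nat" where
  "ord_rank n z i = card {j. j < n \<and> z j < z i}"

definition ord_success :: "nat \<Rightarrow> nat \<Rightarrow> real \<Rightarrow> (nat \<Rightarrow> real) \<Rightarrow> (nat \<Rightarrow> real) \<Rightarrow> bool" where
  "ord_success n m xs z x \<longleftrightarrow> (\<exists>i<n. ord_rank n z i < m \<and> x i \<le> xs)"

definition f_Xbar :: "(real \<Rightarrow> real) \<Rightarrow> real \<Rightarrow> real \<Rightarrow> real \<Rightarrow> real" where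
  "f_Xbar fX \<alpha> xs x = (if x \<ge> xs then fX x / (1 - \<alpha>) else 0)"

definition f_Xund :: "(real \<Rightarrow> real) \<Rightarrow> real \<Rightarrow> real \<Rightarrow> real \<Rightarrow> real" where
  "f_Xund fX \<alpha> xs x = (if x \<le> xs then fX x / \<alpha> else 0)"

definition F_Zbar :: "(real \<Rightarrow> real) \<Rightarrow> (real \<Rightarrow> real) \<Rightarrow> real \<Rightarrow> real \<Rightarrow> real \<Rightarrow> real" where
  "F_Zbar fX FY \<alpha> xs z = (LINT x:{xs..}|lborel. FY (z - x) * f_Xbar fX \<alpha> xs x)"

definition F_Zund :: "(real \<Rightarrow> real) \<Rightarrow> (real \<Rightarrow> real) \<Rightarrow> real \<Rightarrow> real \<Rightarrow> real \<Rightarrow> real" where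
  "F_Zund fX FY \<alpha> xs z = (LINT x:{..xs}|lborel. FY (z - x) * f_Xund fX \<alpha> xs x)"

definition f_Zund :: "(real \<Rightarrow> real) \<Rightarrow> (real \<Rightarrow> real) \<Rightarrow> real \<Rightarrow> real \<Rightarrow> real \<Rightarrow> real" where
  "f_Zund fX fY \<alpha> xs z = (LINT x:{..xs}|lborel. fY (z - x) * f_Xund fX \<alpha> xs x)"

text \<open>CDF of the (g+m)-th smallest / density of the minimum, as in the paper.\<close>

definition F_Z_gm :: "nat \<Rightarrow> nat \<Rightarrow> nat \<Rightarrow> (real \<Rightarrow> real) \<Rightarrow> (real \<Rightarrow> real) \<Rightarrow> real \<Rightarrow> real \<Rightarrow> real \<Rightarrow> real" where
  "F_Z_gm n m g fX FY \<alpha> xs z =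
     (\<Sum>j=0..n-g-m. real ((n - g) choose j) * (1 - F_Zbar fX FY \<alpha> xs z) ^ j
                      * (F_Zbar fX FY \<alpha> xs z) ^ (n - g - j))"

definition f_Z1_g :: "nat \<Rightarrow> (real \<Rightarrow> real) \<Rightarrow> (real \<Rightarrow> real) \<Rightarrow> (real \<Rightarrow> real) \<Rightarrow> real \<Rightarrow> real \<Rightarrow> real \<Rightarrow> real" where
  "f_Z1_g g fX fY FY \<alpha> xs z =
     real g * (1 - F_Zund fX FY \<alpha> xs z) ^ (g - 1) * f_Zund fX fY \<alpha> xs z"

end

theory Submission
  imports Defs
begin

text \<open>
  A run fails iff either all designs are bad (\<open>X > x*\<close>), or, with \<open>S\<close> the set of good designs
  and \<open>i\<close> the first minimiser of \<open>Z\<close> on \<open>S\<close>, at least \<open>m\<close> bad designs have \<open>Z\<close> strictly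
  below \<open>Z i\<close>; these events are disjoint in \<open>(S, i)\<close>. Conditioning on the pair \<open>(X i, Y i)\<close>,
  independence turns the constraints on the other designs into a product: each other good design
  lies above \<open>Z i = z\<close> with probability \<open>\<alpha> (1 - F_Zund z)\<close>, and the number of the \<open>n - |S|\<close>
  bad designs below \<open>z\<close> is binomial with parameter \<open>F_Zbar z\<close>. Integrating against the
  sub-density \<open>\<alpha> f_Zund\<close> of \<open>Z i\<close> on \<open>{X i \<le> x*}\<close> and summing over the \<open>|S|\<close> choices of \<open>i\<close>
  and the \<open>n choose |S|\<close> choices of \<open>S\<close> gives the formula.
\<close>

section \<open>Counting and ranking\<close>

lemma sum_subsets_by_card:
  fixes h :: "nat \<Rightarrow> 'b::comm_semiring_1"
  assumes "finite R"
  shows "(\<Sum>T | T \<subseteq> R \<and> P (card T). h (card T))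
       = (\<Sum>k | k \<le> card R \<and> P k. of_nat (card R choose k) * h k)"
proof -
  have "(\<Sum>T | T \<subseteq> R \<and> P (card T). h (card T))
      = (\<Sum>k | k \<le> card R \<and> P k. \<Sum>T | T \<in> {T. T \<subseteq> R \<and> P (card T)} \<and> card T = k. h (card T))"
    by (rule sum.group[symmetric]) (use assms in \<open>auto intro: card_mono\<close>)
  also have "\<dots> = (\<Sum>k | k \<le> card R \<and> P k. of_nat (card R choose k) * h k)"
  proof (rule sum.cong)
    fix k assume "k \<in> {k. k \<le> card R \<and> P k}"
    then have "{T. T \<in> {T. T \<subseteq> R \<and> P (card T)} \<and> card T = k} = {T. T \<subseteq> R \<and> card T = k}"
      by auto
    then show "(\<Sum>T | T \<in> {T. T \<subseteq> R \<and> P (card T)} \<and> card T = k. h (card T))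
             = of_nat (card R choose k) * h k"
      using n_subsets[OF assms, of k] by simp
  qed simp
  finally show ?thesis .
qed

lemma binomial_upper_tail_scaled:
  fixes a c :: "'b::comm_ring_1"
  assumes "m \<le> r"
  shows "(\<Sum>k | k \<le> r \<and> m \<le> k. of_nat (r choose k) * ((c * a) ^ k * (c * (1 - a)) ^ (r - k)))
       = c ^ r * (\<Sum>j=0..r-m. of_nat (r choose j) * (1 - a) ^ j * a ^ (r - j))"
proof -
  have "(\<Sum>j=0..r-m. of_nat (r choose j) * (1 - a) ^ j * a ^ (r - j))
      = (\<Sum>k | k \<le> r \<and> m \<le> k. of_nat (r choose k) * (a ^ k * (1 - a) ^ (r - k)))"
  proof (rule sum.reindex_bij_witness[where j="\<lambda>j. r - j" and i="\<lambda>k. r - k"])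
    fix j assume "j \<in> {0..r-m}"
    then show "of_nat (r choose (r - j)) * (a ^ (r - j) * (1 - a) ^ (r - (r - j)))
             = of_nat (r choose j) * (1 - a) ^ j * a ^ (r - j)"
      using assms binomial_symmetric[of j r] by (auto simp: mult_ac)
  qed (use assms in auto)
  moreover have "c ^ r = c ^ k * c ^ (r - k)" if "k \<le> r" for k
    using that by (simp add: power_add[symmetric])
  ultimately show ?thesis
    by (auto simp: sum_distrib_left power_mult_distrib mult_ac intro!: sum.cong)
qed

definition first_argmin :: "nat set \<Rightarrow> (nat \<Rightarrow> real) \<Rightarrow> nat \<Rightarrow> bool" where
  "first_argmin S z i \<longleftrightarrow> i \<in> S \<and> (\<forall>k\<in>S. k < i \<longrightarrow> z i < z k) \<and> (\<forall>k\<in>S. i < k \<longrightarrow> z i \<le> z k)"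

lemma first_argmin_le: "first_argmin S z i \<Longrightarrow> k \<in> S \<Longrightarrow> z i \<le> z k"
  unfolding first_argmin_def by (cases k i rule: linorder_cases) auto

lemma first_argmin_unique: "first_argmin S z i \<Longrightarrow> first_argmin S z j \<Longrightarrow> i = j"
  unfolding first_argmin_def by (cases i j rule: linorder_cases) force+

lemma first_argmin_exists:
  assumes "finite S" "S \<noteq> {}" obtains i where "first_argmin S z i"
proof
  define A where "A = {k \<in> S. z k = Min (z ` S)}"
  have "Min (z ` S) \<in> z ` S"
    using assms by (intro Min_in) auto
  then have "finite A" "A \<noteq> {}"
    using assms(1) unfolding A_def by (auto simp del: Min_in)
  moreover have "Min (z ` S) \<le> z k" if "k \<in> S" for k
    using assms that by simp
  ultimately show "first_argmin S z (Min A)"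
    using Min_in[of A] Min_le[of A] unfolding first_argmin_def A_def
    by (smt (verit, ccfv_threshold) mem_Collect_eq not_le)
qed

lemma not_ord_success_iff:
  "\<not> ord_success n m xs z x \<longleftrightarrow>
     (\<forall>k<n. xs < x k) \<or>
     (\<exists>i. first_argmin {k. k < n \<and> x k \<le> xs} z i \<and> m \<le> card {j. j < n \<and> xs < x j \<and> z j < z i})"
  (is "_ \<longleftrightarrow> _ \<or> (\<exists>i. first_argmin ?G z i \<and> m \<le> card (?B i))")
proof
  assume fail: "\<not> ord_success n m xs z x"
  show "(\<forall>k<n. xs < x k) \<or> (\<exists>i. first_argmin ?G z i \<and> m \<le> card (?B i))"
  proof (cases "?G = {}")
    case False
    then obtain i where i: "first_argmin ?G z i"
      using first_argmin_exists[of ?G] by auto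
    then have "{j. j < n \<and> z j < z i} = ?B i"
      using first_argmin_le[OF i] by (force simp: not_le)
    moreover have "i < n" "x i \<le> xs" using i by (auto simp: first_argmin_def)
    ultimately have "m \<le> card (?B i)"
      using fail unfolding ord_success_def ord_rank_def by (metis not_le)
    with i show ?thesis by blast
  qed (auto simp: not_le)
next
  assume "(\<forall>k<n. xs < x k) \<or> (\<exists>i. first_argmin ?G z i \<and> m \<le> card (?B i))"
  then show "\<not> ord_success n m xs z x"
  proof
    assume "\<exists>i. first_argmin ?G z i \<and> m \<le> card (?B i)"
    then obtain i where i: "first_argmin ?G z i" and m: "m \<le> card (?B i)" by blast
    have "m \<le> ord_rank n z j" if "j < n" "x j \<le> xs" for j
    proof -
      have "?B i \<subseteq> {l. l < n \<and> z l < z j}"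
        using first_argmin_le[OF i, of j] that by auto
      then have "card (?B i) \<le> ord_rank n z j"
        unfolding ord_rank_def by (intro card_mono) auto
      with m show ?thesis by linarith
    qed
    then show ?thesis by (auto simp: ord_success_def not_less)
  qed (auto simp: ord_success_def not_le[symmetric])
qed

section \<open>Independence and product densities\<close>

lemma (in prob_space) indep_vars_Pair:
  fixes X Y :: "'i \<Rightarrow> 'a \<Rightarrow> 'b::euclidean_space"
  assumes "indep_vars (\<lambda>_. borel) (case_sum X Y) (Inl ` I \<union> Inr ` I)"
  shows "indep_vars (\<lambda>_. lborel \<Otimes>\<^sub>M lborel) (\<lambda>i \<omega>. (X i \<omega>, Y i \<omega>)) I"
proof -
  have "indep_vars (\<lambda>i. Pi\<^sub>M {Inl i, Inr i} (\<lambda>_. borel))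
      (\<lambda>i \<omega>. restrict (\<lambda>j. case_sum X Y j \<omega>) {Inl i, Inr i}) I"
    by (rule indep_vars_restrict[OF assms]) (auto simp: disjoint_family_on_def)
  then have "indep_vars (\<lambda>_. lborel \<Otimes>\<^sub>M lborel) (\<lambda>i \<omega>. (\<lambda>f. (f (Inl i), f (Inr i)))
      (restrict (\<lambda>j. case_sum X Y j \<omega>) {Inl i, Inr i})) I"
    by (rule indep_vars_compose2)
      (auto simp: measurable_lborel1 intro!: measurable_Pair measurable_component_singleton)
  then show ?thesis by simp
qed

lemma (in prob_space) indep_var_Pair_components:
  fixes X Y :: "'i \<Rightarrow> 'a \<Rightarrow> 'b::euclidean_space"
  assumes "indep_vars (\<lambda>_. borel) (case_sum X Y) (Inl ` I \<union> Inr ` I)" and "i \<in> I"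
  shows "indep_var lborel (X i) lborel (Y i)"
proof -
  have "indep_var (Pi\<^sub>M {Inl i} (\<lambda>_. borel)) (\<lambda>\<omega>. restrict (\<lambda>j. case_sum X Y j \<omega>) {Inl i})
      (Pi\<^sub>M {Inr i} (\<lambda>_. borel)) (\<lambda>\<omega>. restrict (\<lambda>j. case_sum X Y j \<omega>) {Inr i})"
    by (rule indep_var_restrict[OF assms(1)]) (use assms(2) in auto)
  then have "indep_var lborel ((\<lambda>f. f (Inl i)) \<circ> (\<lambda>\<omega>. restrict (\<lambda>j. case_sum X Y j \<omega>) {Inl i}))
      lborel ((\<lambda>f. f (Inr i)) \<circ> (\<lambda>\<omega>. restrict (\<lambda>j. case_sum X Y j \<omega>) {Inr i}))"
    by (rule indep_var_compose)
      (auto simp: measurable_lborel1 intro!: measurable_component_singleton)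
  then show ?thesis by (simp add: comp_def)
qed

lemma (in prob_space) emeasure_indep_var_Pair:
  assumes indep: "indep_var MA A MB B" and G: "G \<in> sets (MA \<Otimes>\<^sub>M MB)"
  shows "emeasure M {\<omega> \<in> space M. (A \<omega>, B \<omega>) \<in> G}
       = (\<integral>\<^sup>+\<omega>. emeasure M {\<omega>' \<in> space M. (A \<omega>, B \<omega>') \<in> G} \<partial>M)"
proof -
  have A[measurable]: "A \<in> measurable M MA" and B[measurable]: "B \<in> measurable M MB"
    using indep_var_rv1[OF indep] indep_var_rv2[OF indep] .
  interpret B: prob_space "distr M MB B" by (rule prob_space_distr) simp
  have "emeasure M {\<omega> \<in> space M. (A \<omega>, B \<omega>) \<in> G}
      = emeasure (distr M (MA \<Otimes>\<^sub>M MB) (\<lambda>\<omega>. (A \<omega>, B \<omega>))) G"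
    using G by (subst emeasure_distr) (auto simp: vimage_def Int_def conj_commute)
  also have "\<dots> = emeasure (distr M MA A \<Otimes>\<^sub>M distr M MB B) G"
    using indep by (simp add: indep_var_distribution_eq)
  also have "\<dots> = (\<integral>\<^sup>+a. emeasure (distr M MB B) (Pair a -` G) \<partial>distr M MA A)"
    using G by (intro B.emeasure_pair_measure_alt) simp
  also have "\<dots> = (\<integral>\<^sup>+\<omega>. emeasure (distr M MB B) (Pair (A \<omega>) -` G) \<partial>M)"
    using G by (intro nn_integral_distr B.measurable_emeasure_Pair) simp_all
  also have "\<dots> = (\<integral>\<^sup>+\<omega>. emeasure M {\<omega>' \<in> space M. (A \<omega>, B \<omega>') \<in> G} \<partial>M)"
  proof (rule nn_integral_cong)
    fix \<omega> assume "\<omega> \<in> space M"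
    then have "Pair (A \<omega>) -` G \<in> sets MB"
      using G measurable_space[OF A] by (intro sets_Pair1) simp
    then show "emeasure (distr M MB B) (Pair (A \<omega>) -` G) = emeasure M {\<omega>' \<in> space M. (A \<omega>, B \<omega>') \<in> G}"
      by (subst emeasure_distr) (auto intro!: arg_cong[where f="emeasure M"])
  qed
  finally show ?thesis .
qed

lemma (in prob_space) prob_Union_indep_boxes:
  assumes indep: "indep_vars N V I" and I: "finite I" "I \<noteq> {}" and "finite \<T>"
    and A: "\<And>t k. t \<in> \<T> \<Longrightarrow> k \<in> I \<Longrightarrow> A t k \<in> sets (N k)"
    and disj: "\<And>s t. s \<in> \<T> \<Longrightarrow> t \<in> \<T> \<Longrightarrow> s \<noteq> t \<Longrightarrow> \<exists>k\<in>I. A s k \<inter> A t k = {}"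
  shows "prob (\<Union>t\<in>\<T>. \<Inter>k\<in>I. V k -` A t k \<inter> space M)
       = (\<Sum>t\<in>\<T>. \<Prod>k\<in>I. prob (V k -` A t k \<inter> space M))"
proof -
  have "V k \<in> measurable M (N k)" if "k \<in> I" for k
    using indep that by (simp add: indep_vars_def)
  then have ev: "(\<Inter>k\<in>I. V k -` A t k \<inter> space M) \<in> events" if "t \<in> \<T>" for t
    using A that I by (intro sets.finite_INT measurable_sets) auto
  have "prob (\<Union>t\<in>\<T>. \<Inter>k\<in>I. V k -` A t k \<inter> space M) = (\<Sum>t\<in>\<T>. prob (\<Inter>k\<in>I. V k -` A t k \<inter> space M))"
  proof (rule finite_measure_finite_Union)
    show "disjoint_family_on (\<lambda>t. \<Inter>k\<in>I. V k -` A t k \<inter> space M) \<T>"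
      unfolding disjoint_family_on_def
    proof (intro ballI impI)
      fix s t assume "s \<in> \<T>" "t \<in> \<T>" "s \<noteq> t"
      then obtain k where "k \<in> I" "A s k \<inter> A t k = {}" using disj by blast
      then show "(\<Inter>k\<in>I. V k -` A s k \<inter> space M) \<inter> (\<Inter>k\<in>I. V k -` A t k \<inter> space M) = {}"
        by blast
    qed
  qed (use \<open>finite \<T>\<close> ev in blast)+
  also have "\<dots> = (\<Sum>t\<in>\<T>. \<Prod>k\<in>I. prob (V k -` A t k \<inter> space M))"
    using I A by (intro sum.cong refl indep_varsD_finite[OF indep]) auto
  finally show ?thesis .
qed

lemma nn_integral_pair_density_plus:
  fixes f g :: "real \<Rightarrow> real" and Q :: "real \<Rightarrow> ennreal"
  assumes [measurable]: "f \<in> borel_measurable borel" "g \<in> borel_measurable borel"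
    "Q \<in> borel_measurable borel" "C \<in> sets borel"
  shows "(\<integral>\<^sup>+(x, y). ennreal (f x) * ennreal (g y) * (indicator C x * Q (x + y)) \<partial>(lborel \<Otimes>\<^sub>M lborel))
       = (\<integral>\<^sup>+z. Q z * (\<integral>\<^sup>+x. indicator C x * ennreal (f x) * ennreal (g (z - x)) \<partial>lborel) \<partial>lborel)"
proof -
  have "(\<integral>\<^sup>+(x, y). ennreal (f x) * ennreal (g y) * (indicator C x * Q (x + y)) \<partial>(lborel \<Otimes>\<^sub>M lborel))
      = (\<integral>\<^sup>+x. \<integral>\<^sup>+y. indicator C x * ennreal (f x) * ennreal (g y) * Q (x + y) \<partial>lborel \<partial>lborel)"
    by (subst lborel.nn_integral_fst[symmetric]) (auto simp: mult_ac)
  also have "\<dots> = (\<integral>\<^sup>+x. \<integral>\<^sup>+z. indicator C x * ennreal (f x) * ennreal (g (z - x)) * Q z \<partial>lborel \<partial>lborel)"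
  proof (rule nn_integral_cong)
    fix x :: real
    show "(\<integral>\<^sup>+y. indicator C x * ennreal (f x) * ennreal (g y) * Q (x + y) \<partial>lborel)
        = (\<integral>\<^sup>+z. indicator C x * ennreal (f x) * ennreal (g (z - x)) * Q z \<partial>lborel)"
      using nn_integral_real_affine[of "\<lambda>z. indicator C x * ennreal (f x) * ennreal (g (z - x)) * Q z" 1 "x"]
      by simp
  qed
  also have "\<dots> = (\<integral>\<^sup>+z. \<integral>\<^sup>+x. indicator C x * ennreal (f x) * ennreal (g (z - x)) * Q z \<partial>lborel \<partial>lborel)"
    by (rule lborel_pair.Fubini') measurable
  also have "\<dots> = (\<integral>\<^sup>+z. Q z * (\<integral>\<^sup>+x. indicator C x * ennreal (f x) * ennreal (g (z - x)) \<partial>lborel) \<partial>lborel)"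
    by (subst nn_integral_cmult[symmetric]) (auto simp: mult_ac)
  finally show ?thesis .
qed

lemma pred_sets_case_prod:
  fixes P :: "'a::topological_space \<Rightarrow> 'b::topological_space \<Rightarrow> bool"
  shows "Measurable.pred (borel \<Otimes>\<^sub>M borel) (\<lambda>p. P (fst p) (snd p)) \<Longrightarrow> {(x, y). P x y} \<in> sets (borel \<Otimes>\<^sub>M borel)"
  unfolding pred_def by (simp add: space_pair_measure case_prod_beta')

section \<open>The additive noise model\<close>

locale additive_noise_model = prob_space M for M :: "'a measure" +
  fixes X Y :: "nat \<Rightarrow> 'a \<Rightarrow> real" and fX fY FY :: "real \<Rightarrow> real"
    and n m :: nat and \<alpha> xs :: real
  assumes m_pos: "1 \<le> m" and m_le_n: "m \<le> n"
    and \<alpha>_pos: "0 < \<alpha>" and \<alpha>_less_1: "\<alpha> < 1"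
    and indep: "indep_vars (\<lambda>_. borel) (case_sum X Y) (Inl ` {..<n} \<union> Inr ` {..<n})"
    and fX_borel[measurable]: "fX \<in> borel_measurable borel" and fX_nonneg: "\<And>x. 0 \<le> fX x"
    and fY_borel[measurable]: "fY \<in> borel_measurable borel" and fY_nonneg: "\<And>y. 0 \<le> fY y"
    and X_density: "\<And>i. i < n \<Longrightarrow> distributed M lborel (X i) (\<lambda>x. ennreal (fX x))"
    and Y_density: "\<And>i. i < n \<Longrightarrow> distributed M lborel (Y i) (\<lambda>y. ennreal (fY y))"
    and FY_eq: "\<And>i z. i < n \<Longrightarrow> FY z = prob {\<omega> \<in> space M. Y i \<omega> \<le> z}"
    and X_quantile: "\<And>i. i < n \<Longrightarrow> prob {\<omega> \<in> space M. X i \<omega> \<le> xs} = \<alpha>"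
begin

abbreviation "F_und \<equiv> F_Zund fX FY \<alpha> xs"
abbreviation "F_bar \<equiv> F_Zbar fX FY \<alpha> xs"
abbreviation "f_und \<equiv> f_Zund fX fY \<alpha> xs"

definition V :: "nat \<Rightarrow> 'a \<Rightarrow> real \<times> real" where
  "V i \<omega> = (X i \<omega>, Y i \<omega>)"

definition pair_law :: "(real \<times> real) measure" where
  "pair_law = density (lborel \<Otimes>\<^sub>M lborel) (\<lambda>(x, y). ennreal (fX x) * ennreal (fY y))"

lemma n_pos: "0 < n"
  using m_pos m_le_n by simp

lemma V_measurable[measurable]: "i < n \<Longrightarrow> V i \<in> measurable M (lborel \<Otimes>\<^sub>M lborel)"
  using distributed_measurable[OF X_density] distributed_measurable[OF Y_density]
  unfolding V_def by (intro measurable_Pair) (auto simp: measurable_lborel2)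

lemma distr_V: assumes "i < n" shows "distr M (lborel \<Otimes>\<^sub>M lborel) (V i) = pair_law"
proof -
  have "distributed M (lborel \<Otimes>\<^sub>M lborel) (V i) (\<lambda>(x, y). ennreal (fX x) * ennreal (fY y))"
    unfolding V_def using assms
    by (intro distributed_joint_indep X_density Y_density indep_var_Pair_components[OF indep])
      (auto intro: lborel.sigma_finite_measure_axioms)
  then show ?thesis
    unfolding pair_law_def by (rule distributed_distr_eq_density)
qed

lemma sets_pair_law[measurable_cong]: "sets pair_law = sets (borel \<Otimes>\<^sub>M borel)"
  by (simp add: pair_law_def)

sublocale pair_law: prob_space pair_law
  using prob_space_distr[OF V_measurable[OF n_pos]] by (simp add: distr_V[OF n_pos])

lemma measure_pair_law:
  "i < n \<Longrightarrow> A \<in> sets (borel \<Otimes>\<^sub>M borel) \<Longrightarrow> measure pair_law A = prob (V i -` A \<inter> space M)"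
  by (subst distr_V[symmetric]) (auto intro: measure_distr)

lemma indep_V: "indep_vars (\<lambda>_. lborel \<Otimes>\<^sub>M lborel) V {..<n}"
  using indep_vars_Pair[OF indep] by (simp add: V_def[abs_def])

lemma measure_pair_law_fst_le: "measure pair_law {(x, y). x \<le> xs} = \<alpha>"
proof -
  have "measure pair_law {(x, y). x \<le> xs} = prob (V 0 -` {(x, y). x \<le> xs} \<inter> space M)"
    by (rule measure_pair_law[OF n_pos], rule pred_sets_case_prod) measurable
  also have "\<dots> = prob {\<omega> \<in> space M. X 0 \<omega> \<le> xs}"
    by (rule arg_cong[where f=prob]) (auto simp: V_def)
  finally show ?thesis
    using X_quantile[OF n_pos] by simp
qed

lemma measure_pair_law_fst_gt: "measure pair_law {(x, y). xs < x} = 1 - \<alpha>"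
proof -
  have "{(x, y). x \<le> xs} \<in> sets pair_law"
    unfolding sets_pair_law by (rule pred_sets_case_prod) measurable
  moreover have "{(x, y). xs < x} = space pair_law - {(x, y). x \<le> xs}"
    by (auto simp: pair_law_def space_pair_measure)
  ultimately show ?thesis
    by (simp add: pair_law.prob_compl measure_pair_law_fst_le)
qed

lemma nn_integral_fY_atMost: "(\<integral>\<^sup>+y. ennreal (fY y) * indicator {..t} y \<partial>lborel) = ennreal (FY t)"
proof -
  have "{\<omega> \<in> space M. Y 0 \<omega> \<le> t} = Y 0 -` {..t} \<inter> space M"
    by auto
  then show ?thesis
    using distributed_emeasure[OF Y_density[OF n_pos], of "{..t}"] FY_eq[OF n_pos, of t]
    by (simp add: emeasure_eq_measure)
qed

lemma FY_nonneg: "0 \<le> FY t" and FY_le_1: "FY t \<le> 1"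
  using FY_eq[OF n_pos] by auto

lemma FY_borel[measurable]: "FY \<in> borel_measurable borel"
proof (rule borel_measurable_mono, rule monoI)
  fix s t :: real assume "s \<le> t"
  then show "FY s \<le> FY t"
    unfolding FY_eq[OF n_pos] using distributed_measurable[OF Y_density[OF n_pos]]
    by (intro finite_measure_mono) (auto simp: measurable_lborel2)
qed

lemma integrable_fX: "integrable lborel fX"
  using distributed_emeasure[OF X_density[OF n_pos], of UNIV] fX_nonneg
  by (intro integrableI_nn_integral_finite[where x=1]) (auto simp: emeasure_space_1)

lemma measure_pair_law_lower:
  assumes [measurable]: "C \<in> sets borel"
  shows "measure pair_law {(x, y). x \<in> C \<and> x + y \<le> z}
       = (\<integral>x. indicator C x * (fX x * FY (z - x)) \<partial>lborel)"
proof -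
  have int: "integrable lborel (\<lambda>x. indicator C x * (fX x * FY (z - x)))"
    by (rule Bochner_Integration.integrable_bound[OF integrable_fX])
      (auto simp: fX_nonneg FY_nonneg FY_le_1 indicator_def intro!: mult_right_le_one_le)
  have "emeasure pair_law {(x, y). x \<in> C \<and> x + y \<le> z}
      = (\<integral>\<^sup>+x. \<integral>\<^sup>+y. ennreal (fX x) * ennreal (fY y) * indicator {(x, y). x \<in> C \<and> x + y \<le> z} (x, y) \<partial>lborel \<partial>lborel)"
    unfolding pair_law_def
    by (subst emeasure_density, measurable, rule pred_sets_case_prod, measurable,
        subst lborel.nn_integral_fst[symmetric]) (auto simp: case_prod_beta')
  also have "\<dots> = (\<integral>\<^sup>+x. ennreal (fX x) * indicator C x * (\<integral>\<^sup>+y. ennreal (fY y) * indicator {..z - x} y \<partial>lborel) \<partial>lborel)"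
    by (subst nn_integral_cmult[symmetric])
      (auto intro!: nn_integral_cong simp: indicator_def algebra_simps)
  also have "\<dots> = (\<integral>\<^sup>+x. ennreal (indicator C x * (fX x * FY (z - x))) \<partial>lborel)"
    by (intro nn_integral_cong)
      (auto simp: nn_integral_fY_atMost ennreal_mult' fX_nonneg FY_nonneg split: split_indicator)
  also have "\<dots> = ennreal (\<integral>x. indicator C x * (fX x * FY (z - x)) \<partial>lborel)"
    using int by (rule nn_integral_eq_integral) (auto simp: fX_nonneg FY_nonneg)
  finally show ?thesis
    using int by (simp add: pair_law.emeasure_eq_measure integral_nonneg_AE fX_nonneg FY_nonneg)
qed

lemma AE_pair_law_sum_neq: "AE (x, y) in pair_law. x + y \<noteq> z"
proof -
  have "emeasure pair_law {(x, y). x + y = z}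
      = (\<integral>\<^sup>+x. ennreal (fX x) * (\<integral>\<^sup>+y. ennreal (fY y) * indicator {z - x} y \<partial>lborel) \<partial>lborel)"
    unfolding pair_law_def
    by (subst emeasure_density, measurable, rule pred_sets_case_prod, measurable,
        subst lborel.nn_integral_fst[symmetric])
      (auto intro!: nn_integral_cong simp: case_prod_beta' nn_integral_cmult[symmetric] indicator_def algebra_simps)
  also have "\<dots> = 0"
    by (simp add: nn_integral_cmult_indicator)
  finally have "{(x, y). x + y = z} \<in> null_sets pair_law"
    by (auto simp: null_sets_def sets_pair_law intro!: pred_sets_case_prod)
  then show ?thesis
    by (rule AE_I') auto
qed

lemma F_Zund_eq: "\<alpha> * F_und z = measure pair_law {(x, y). x \<le> xs \<and> x + y \<le> z}"
proof -
  have "\<alpha> * F_und z = (\<integral>x. \<alpha> * (indicator {..xs} x * (FY (z - x) * f_Xund fX \<alpha> xs x)) \<partial>lborel)"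
    unfolding F_Zund_def set_lebesgue_integral_def by simp
  also have "\<dots> = (\<integral>x. indicator {..xs} x * (fX x * FY (z - x)) \<partial>lborel)"
    using \<alpha>_pos by (intro Bochner_Integration.integral_cong) (auto simp: f_Xund_def indicator_def)
  finally show ?thesis
    using measure_pair_law_lower[of "{..xs}" z] by simp
qed

lemma F_Zbar_eq: "(1 - \<alpha>) * F_bar z = measure pair_law {(x, y). xs < x \<and> x + y \<le> z}"
proof -
  have "(1 - \<alpha>) * F_bar z = (\<integral>x. (1 - \<alpha>) * (indicator {xs..} x * (FY (z - x) * f_Xbar fX \<alpha> xs x)) \<partial>lborel)"
    unfolding F_Zbar_def set_lebesgue_integral_def by simp
  also have "\<dots> = (\<integral>x. indicator {xs<..} x * (fX x * FY (z - x)) \<partial>lborel)"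
    using \<alpha>_less_1 AE_lborel_singleton[of xs]
    by (intro integral_cong_AE) (auto simp: f_Xbar_def indicator_def elim!: eventually_mono)
  finally show ?thesis
    using measure_pair_law_lower[of "{xs<..}" z] by simp
qed

lemma F_Zund_borel[measurable]: "F_und \<in> borel_measurable borel"
  unfolding F_Zund_def set_lebesgue_integral_def f_Xund_def by measurable

lemma F_Zbar_borel[measurable]: "F_bar \<in> borel_measurable borel"
  unfolding F_Zbar_def set_lebesgue_integral_def f_Xbar_def by measurable

definition good_after :: "real \<Rightarrow> (real \<times> real) set" where
  "good_after z = {(x, y). x \<le> xs \<and> z < x + y}"

definition good_not_before :: "real \<Rightarrow> (real \<times> real) set" where
  "good_not_before z = {(x, y). x \<le> xs \<and> z \<le> x + y}"

definition bad_before :: "real \<Rightarrow> (real \<times> real) set" where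
  "bad_before z = {(x, y). xs < x \<and> x + y < z}"

definition bad_not_before :: "real \<Rightarrow> (real \<times> real) set" where
  "bad_not_before z = {(x, y). xs < x \<and> z \<le> x + y}"

lemmas region_defs = good_after_def good_not_before_def bad_before_def bad_not_before_def

lemma sets_regions[measurable]:
  "good_after z \<in> sets (borel \<Otimes>\<^sub>M borel)" "good_not_before z \<in> sets (borel \<Otimes>\<^sub>M borel)"
  "bad_before z \<in> sets (borel \<Otimes>\<^sub>M borel)" "bad_not_before z \<in> sets (borel \<Otimes>\<^sub>M borel)"
  unfolding region_defs by (rule pred_sets_case_prod; measurable)+

lemma mem_regions:
  "u \<in> good_after z \<longleftrightarrow> fst u \<le> xs \<and> z < fst u + snd u"
  "u \<in> good_not_before z \<longleftrightarrow> fst u \<le> xs \<and> z \<le> fst u + snd u"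
  "u \<in> bad_before z \<longleftrightarrow> xs < fst u \<and> fst u + snd u < z"
  "u \<in> bad_not_before z \<longleftrightarrow> xs < fst u \<and> z \<le> fst u + snd u"
  by (cases u; simp add: region_defs)+

lemma measure_good_after: "measure pair_law (good_after z) = \<alpha> * (1 - F_und z)"
proof -
  have "good_after z = {(x, y). x \<le> xs} - {(x, y). x \<le> xs \<and> x + y \<le> z}"
    by (auto simp: good_after_def)
  moreover have "{(x, y). x \<le> xs} \<in> sets pair_law" "{(x, y). x \<le> xs \<and> x + y \<le> z} \<in> sets pair_law"
    unfolding sets_pair_law by (rule pred_sets_case_prod; measurable)+
  ultimately show ?thesis
    by (simp add: pair_law.finite_measure_Diff measure_pair_law_fst_le F_Zund_eq[symmetric]
        subset_iff algebra_simps)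
qed

lemma measure_bad_before: "measure pair_law (bad_before z) = (1 - \<alpha>) * F_bar z"
proof -
  have "measure pair_law (bad_before z) = measure pair_law {(x, y). xs < x \<and> x + y \<le> z}"
    using AE_pair_law_sum_neq[of z]
    by (intro measure_eq_AE)
      (auto simp: sets_pair_law bad_before_def intro!: pred_sets_case_prod elim!: eventually_mono)
  then show ?thesis
    by (simp add: F_Zbar_eq)
qed

lemma measure_good_not_before: "measure pair_law (good_not_before z) = \<alpha> * (1 - F_und z)"
proof -
  have "measure pair_law (good_not_before z) = measure pair_law (good_after z)"
  proof (rule measure_eq_AE)
    show "AE p in pair_law. p \<in> good_not_before z \<longleftrightarrow> p \<in> good_after z"
      using AE_pair_law_sum_neq[of z] by eventually_elim (auto simp: region_defs)
  qed (simp_all add: sets_pair_law sets_regions)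
  then show ?thesis
    by (simp add: measure_good_after)
qed

lemma measure_bad_not_before: "measure pair_law (bad_not_before z) = (1 - \<alpha>) * (1 - F_bar z)"
proof -
  have "bad_not_before z = {(x, y). xs < x} - bad_before z"
    by (auto simp: region_defs)
  moreover have "{(x, y). xs < x} \<in> sets pair_law"
    unfolding sets_pair_law by (rule pred_sets_case_prod) measurable
  moreover have "bad_before z \<subseteq> {(x, y). xs < x}"
    by (auto simp: bad_before_def)
  moreover have "bad_before z \<in> sets pair_law"
    by (simp add: sets_pair_law sets_regions)
  ultimately show ?thesis
    by (simp add: pair_law.finite_measure_Diff measure_pair_law_fst_gt measure_bad_before
        algebra_simps)
qed

lemma f_Zund_borel[measurable]: "f_und \<in> borel_measurable borel"
  unfolding f_Zund_def set_lebesgue_integral_def f_Xund_def by measurable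

lemma f_Zund_nonneg: "0 \<le> f_und z"
  unfolding f_Zund_def set_lebesgue_integral_def f_Xund_def
  using \<alpha>_pos by (auto intro!: integral_nonneg_AE simp: fX_nonneg fY_nonneg)

lemma alpha_f_Zund: "\<alpha> * f_und z = (\<integral>x. indicator {..xs} x * (fX x * fY (z - x)) \<partial>lborel)"
proof -
  have "\<alpha> * f_und z = (\<integral>x. \<alpha> * (indicator {..xs} x * (fY (z - x) * f_Xund fX \<alpha> xs x)) \<partial>lborel)"
    unfolding f_Zund_def set_lebesgue_integral_def by simp
  also have "\<dots> = (\<integral>x. indicator {..xs} x * (fX x * fY (z - x)) \<partial>lborel)"
    using \<alpha>_pos by (intro Bochner_Integration.integral_cong) (auto simp: f_Xund_def indicator_def)
  finally show ?thesis .
qed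

lemma nn_integral_pair_law_lower:
  assumes [measurable]: "Q \<in> borel_measurable borel"
  shows "(\<integral>\<^sup>+(x, y). indicator {..xs} x * Q (x + y) \<partial>pair_law)
       = (\<integral>\<^sup>+z. Q z * (\<integral>\<^sup>+x. ennreal (indicator {..xs} x * (fX x * fY (z - x))) \<partial>lborel) \<partial>lborel)"
proof -
  have "(\<integral>\<^sup>+(x, y). indicator {..xs} x * Q (x + y) \<partial>pair_law)
      = (\<integral>\<^sup>+(x, y). ennreal (fX x) * ennreal (fY y) * (indicator {..xs} x * Q (x + y)) \<partial>(lborel \<Otimes>\<^sub>M lborel))"
    unfolding pair_law_def by (subst nn_integral_density) (auto simp: case_prod_beta')
  also have "\<dots> = (\<integral>\<^sup>+z. Q z * (\<integral>\<^sup>+x. indicator {..xs} x * ennreal (fX x) * ennreal (fY (z - x)) \<partial>lborel) \<partial>lborel)"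
    by (rule nn_integral_pair_density_plus) measurable
  finally show ?thesis
    by (simp add: ennreal_mult' fX_nonneg fY_nonneg indicator_mult_ennreal mult_ac)
qed

text \<open>The convolution integral may be infinite on a null set, where it differs from \<open>f_Zund\<close>.\<close>

lemma AE_conv_eq_f_Zund:
  "AE z in lborel. (\<integral>\<^sup>+x. ennreal (indicator {..xs} x * (fX x * fY (z - x))) \<partial>lborel) = ennreal (\<alpha> * f_und z)"
proof -
  have "(\<integral>\<^sup>+z. (\<integral>\<^sup>+x. ennreal (indicator {..xs} x * (fX x * fY (z - x))) \<partial>lborel) \<partial>lborel)
      = (\<integral>\<^sup>+(x, y). indicator {..xs} x \<partial>pair_law)"
    using nn_integral_pair_law_lower[of "\<lambda>_. 1"] by simp
  also have "\<dots> = emeasure pair_law {(x, y). x \<le> xs}"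
    by (subst nn_integral_indicator[symmetric])
      (auto simp: sets_pair_law intro!: pred_sets_case_prod nn_integral_cong split: split_indicator)
  also have "\<dots> = ennreal \<alpha>"
    by (simp add: pair_law.emeasure_eq_measure measure_pair_law_fst_le)
  finally have "AE z in lborel. (\<integral>\<^sup>+x. ennreal (indicator {..xs} x * (fX x * fY (z - x))) \<partial>lborel) \<noteq> \<infinity>"
    by (intro nn_integral_PInf_AE) auto
  then show ?thesis
  proof eventually_elim
    case (elim z)
    then have "integrable lborel (\<lambda>x. indicator {..xs} x * (fX x * fY (z - x)))"
      by (intro integrableI_nonneg) (auto simp: fX_nonneg fY_nonneg top.not_eq_extremum)
    then show ?case
      unfolding alpha_f_Zund by (rule nn_integral_eq_integral) (auto simp: fX_nonneg fY_nonneg)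
  qed
qed

lemma nn_integral_pair_law_lower_density:
  assumes [measurable]: "Q \<in> borel_measurable borel" and "\<And>z. 0 \<le> Q z"
  shows "(\<integral>\<^sup>+(x, y). indicator {..xs} x * ennreal (Q (x + y)) \<partial>pair_law)
       = (\<integral>\<^sup>+z. ennreal (Q z * (\<alpha> * f_und z)) \<partial>lborel)"
  unfolding nn_integral_pair_law_lower[OF measurable_compose[OF assms(1) measurable_ennreal]]
  using AE_conv_eq_f_Zund by (intro nn_integral_cong_AE) (auto simp: ennreal_mult' assms(2) elim!: eventually_mono)

text \<open>The strict and weak inequalities mirror the tie-breaking of \<open>first_argmin\<close>.\<close>

definition outranked :: "nat set \<Rightarrow> nat \<Rightarrow> real \<Rightarrow> (nat \<Rightarrow> real \<times> real) \<Rightarrow> bool" where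
  "outranked S i z w \<longleftrightarrow>
     (\<forall>k\<in>S - {i}. w k \<in> (if k < i then good_after z else good_not_before z)) \<and>
     (\<forall>k\<in>{..<n} - S. xs < fst (w k)) \<and>
     m \<le> card {k \<in> {..<n} - S. fst (w k) + snd (w k) < z}"

definition outranked_box :: "nat set \<Rightarrow> nat \<Rightarrow> real \<Rightarrow> nat set \<Rightarrow> nat \<Rightarrow> (real \<times> real) set" where
  "outranked_box S i z T k =
     (if k \<in> S then if k < i then good_after z else good_not_before z
      else if k \<in> T then bad_before z else bad_not_before z)"

lemma sets_outranked_box: "outranked_box S i z T k \<in> sets (borel \<Otimes>\<^sub>M borel)"
  by (simp add: outranked_box_def sets_regions)

lemma outranked_iff_boxes:
  assumes "S \<subseteq> {..<n}" "i \<in> S"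
  shows "outranked S i z w \<longleftrightarrow>
    (\<exists>T. T \<subseteq> {..<n} - S \<and> m \<le> card T \<and> (\<forall>k\<in>{..<n} - {i}. w k \<in> outranked_box S i z T k))"
proof
  assume w: "outranked S i z w"
  define T where "T = {k \<in> {..<n} - S. fst (w k) + snd (w k) < z}"
  have "w k \<in> outranked_box S i z T k" if "k \<in> {..<n} - {i}" for k
  proof (cases "k \<in> S")
    case True
    then show ?thesis using w that by (auto simp: outranked_def outranked_box_def)
  next
    case False
    with w that have "xs < fst (w k)"
      by (auto simp: outranked_def)
    with False that show ?thesis
      by (cases "w k") (auto simp: outranked_box_def T_def region_defs)
  qed
  moreover have "T \<subseteq> {..<n} - S" "m \<le> card T"
    using w by (auto simp: outranked_def T_def)
  ultimately show "\<exists>T. T \<subseteq> {..<n} - S \<and> m \<le> card T \<and> (\<forall>k\<in>{..<n} - {i}. w k \<in> outranked_box S i z T k)"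
    by blast
next
  assume "\<exists>T. T \<subseteq> {..<n} - S \<and> m \<le> card T \<and> (\<forall>k\<in>{..<n} - {i}. w k \<in> outranked_box S i z T k)"
  then obtain T where T: "T \<subseteq> {..<n} - S" "m \<le> card T"
    and box: "\<And>k. k \<in> {..<n} - {i} \<Longrightarrow> w k \<in> outranked_box S i z T k"
    by blast
  have bad: "xs < fst (w k) \<and> (fst (w k) + snd (w k) < z \<longleftrightarrow> k \<in> T)" if "k \<in> {..<n} - S" for k
  proof -
    have "k \<in> {..<n} - {i}"
      using that assms by auto
    then show ?thesis
      using box[of k] that by (cases "w k") (auto simp: outranked_box_def region_defs split: if_splits)
  qed
  then have "{k \<in> {..<n} - S. fst (w k) + snd (w k) < z} = T"
    using T(1) by auto
  moreover have "w k \<in> (if k < i then good_after z else good_not_before z)" if "k \<in> S - {i}" for k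
    using box[of k] that assms by (auto simp: outranked_box_def)
  ultimately show "outranked S i z w"
    using bad T(2) by (simp add: outranked_def)
qed

lemma outranked_cong:
  assumes "S \<subseteq> {..<n}" "i \<in> S" "\<And>k. k \<in> {..<n} - {i} \<Longrightarrow> w k = w' k"
  shows "outranked S i z w \<longleftrightarrow> outranked S i z w'"
  using assms by (simp add: outranked_iff_boxes)

lemma prod_measure_outranked_box:
  assumes "S \<subseteq> {..<n}" "i \<in> S" "T \<subseteq> {..<n} - S"
  shows "(\<Prod>k\<in>{..<n} - {i}. measure pair_law (outranked_box S i z T k))
       = (\<alpha> * (1 - F_und z)) ^ (card S - 1)
         * (((1 - \<alpha>) * F_bar z) ^ card T * ((1 - \<alpha>) * (1 - F_bar z)) ^ (n - card S - card T))"
proof -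
  have fin: "finite S" "finite T"
    using assms by (auto intro: finite_subset)
  have "({..<n} - {i}) \<inter> {k. k \<in> S} = S - {i}" "({..<n} - {i}) \<inter> - {k. k \<in> S} = {..<n} - S"
    "({..<n} - S) \<inter> {k. k \<in> T} = T" "({..<n} - S) \<inter> - {k. k \<in> T} = {..<n} - S - T"
    using assms by auto
  moreover have "card (S - {i}) = card S - 1" "card ({..<n} - S - T) = n - card S - card T"
    using assms fin by (auto simp: card_Diff_subset Diff_Diff_Int Int_absorb1 Diff_subset_conv)
  ultimately show ?thesis
    by (simp add: outranked_box_def measure_good_after measure_good_not_before measure_bad_before
        measure_bad_not_before if_distrib[of "measure pair_law"] prod.If_cases cong: if_cong)
qed

lemma outranked_boxes_disjoint:
  assumes "i \<in> S" "T \<subseteq> {..<n} - S" "T' \<subseteq> {..<n} - S" "T \<noteq> T'"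
  shows "\<exists>k\<in>{..<n} - {i}. outranked_box S i z T k \<inter> outranked_box S i z T' k = {}"
proof -
  obtain k where "k \<in> {..<n} - S" "k \<in> T \<longleftrightarrow> k \<notin> T'"
    using assms(2-4) by blast
  then show ?thesis
    using assms(1) by (intro bexI[of _ k]) (auto simp: outranked_box_def region_defs)
qed

lemma others_nonempty:
  assumes S: "S \<subseteq> {..<n}" "i \<in> S" and m: "m \<le> n - card S"
  shows "{..<n} - {i} \<noteq> {}"
proof
  assume "{..<n} - {i} = {}"
  then have "S = {..<n}"
    using S by blast
  with m m_pos show False
    by simp
qed

lemma outranked_event_eq:
  assumes S: "S \<subseteq> {..<n}" "i \<in> S" and m: "m \<le> n - card S"
  shows "{\<omega> \<in> space M. outranked S i z (\<lambda>k. V k \<omega>)}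
    = (\<Union>T\<in>{T. T \<subseteq> {..<n} - S \<and> m \<le> card T}. \<Inter>k\<in>{..<n} - {i}. V k -` outranked_box S i z T k \<inter> space M)"
  using others_nonempty[OF S m] by (auto simp: outranked_iff_boxes[OF S])

lemma prob_outranked:
  assumes S: "S \<subseteq> {..<n}" "i \<in> S" and m: "m \<le> n - card S"
  shows "prob {\<omega> \<in> space M. outranked S i z (\<lambda>k. V k \<omega>)}
       = (\<alpha> * (1 - F_und z)) ^ (card S - 1) * ((1 - \<alpha>) ^ (n - card S) * F_Z_gm n m (card S) fX FY \<alpha> xs z)"
proof -
  define R where "R = {..<n} - S"
  define \<T> where "\<T> = {T. T \<subseteq> R \<and> m \<le> card T}"
  have card_R: "card R = n - card S"
    using S by (simp add: R_def card_Diff_subset finite_subset)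
  have "prob {\<omega> \<in> space M. outranked S i z (\<lambda>k. V k \<omega>)}
      = (\<Sum>T\<in>\<T>. \<Prod>k\<in>{..<n} - {i}. prob (V k -` outranked_box S i z T k \<inter> space M))"
    unfolding outranked_event_eq[OF S m] R_def[symmetric] \<T>_def[symmetric]
    using S others_nonempty[OF S m]
    by (intro prob_Union_indep_boxes[OF indep_vars_subset[OF indep_V]] outranked_boxes_disjoint)
      (auto simp: \<T>_def R_def sets_outranked_box)
  also have "\<dots> = (\<Sum>T\<in>\<T>. (\<alpha> * (1 - F_und z)) ^ (card S - 1)
      * (((1 - \<alpha>) * F_bar z) ^ card T * ((1 - \<alpha>) * (1 - F_bar z)) ^ (card R - card T)))"
  proof (rule sum.cong[OF refl])
    fix T assume "T \<in> \<T>"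
    then have T: "T \<subseteq> {..<n} - S" by (simp add: \<T>_def R_def)
    have "(\<Prod>k\<in>{..<n} - {i}. prob (V k -` outranked_box S i z T k \<inter> space M))
        = (\<Prod>k\<in>{..<n} - {i}. measure pair_law (outranked_box S i z T k))"
      by (intro prod.cong refl measure_pair_law[symmetric]) (auto simp: sets_outranked_box)
    then show "(\<Prod>k\<in>{..<n} - {i}. prob (V k -` outranked_box S i z T k \<inter> space M))
        = (\<alpha> * (1 - F_und z)) ^ (card S - 1)
          * (((1 - \<alpha>) * F_bar z) ^ card T * ((1 - \<alpha>) * (1 - F_bar z)) ^ (card R - card T))"
      by (simp add: prod_measure_outranked_box[OF S T] card_R)
  qed
  also have "\<dots> = (\<alpha> * (1 - F_und z)) ^ (card S - 1) * (\<Sum>k | k \<le> card R \<and> m \<le> k.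
      real (card R choose k) * (((1 - \<alpha>) * F_bar z) ^ k * ((1 - \<alpha>) * (1 - F_bar z)) ^ (card R - k)))"
    unfolding \<T>_def sum_distrib_left[symmetric]
    by (subst sum_subsets_by_card) (simp_all add: R_def)
  also have "\<dots> = (\<alpha> * (1 - F_und z)) ^ (card S - 1) * ((1 - \<alpha>) ^ (n - card S) * F_Z_gm n m (card S) fX FY \<alpha> xs z)"
    using binomial_upper_tail_scaled[of m "card R" "1 - \<alpha>" "F_bar z"] m
    by (simp add: card_R F_Z_gm_def)
  finally show ?thesis .
qed

lemma leading_good_iff_outranked:
  assumes "S \<subseteq> {..<n}" "i \<in> S"
  shows "({k. k < n \<and> fst (w k) \<le> xs} = S \<and> first_argmin S (\<lambda>k. fst (w k) + snd (w k)) i \<and>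
         m \<le> card {j. j < n \<and> xs < fst (w j) \<and> fst (w j) + snd (w j) < fst (w i) + snd (w i)})
     \<longleftrightarrow> fst (w i) \<le> xs \<and> outranked S i (fst (w i) + snd (w i)) w"
    (is "?good \<and> ?first \<and> ?beaten \<longleftrightarrow> _")
proof -
  define z where "z = fst (w i) + snd (w i)"
  have bad_eq: "{j. j < n \<and> xs < fst (w j) \<and> fst (w j) + snd (w j) < z}
      = {j \<in> {..<n} - S. fst (w j) + snd (w j) < z}" if ?good
    using that by (auto simp: not_le[symmetric])
  have others: "(\<forall>k\<in>S - {i}. w k \<in> (if k < i then good_after z else good_not_before z))
      \<longleftrightarrow> (\<forall>k\<in>S - {i}. fst (w k) \<le> xs) \<and> ?first"
    using assms by (auto simp: first_argmin_def mem_regions z_def not_less dest: le_neq_trans)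
  show ?thesis
  proof
    assume L: "?good \<and> ?first \<and> ?beaten"
    then have "fst (w i) \<le> xs" "\<forall>k\<in>S - {i}. fst (w k) \<le> xs" "\<forall>k\<in>{..<n} - S. xs < fst (w k)"
      using assms by auto
    with L show "fst (w i) \<le> xs \<and> outranked S i (fst (w i) + snd (w i)) w"
      unfolding outranked_def z_def[symmetric] others bad_eq[OF conjunct1[OF L]] by (simp add: z_def)
  next
    assume R: "fst (w i) \<le> xs \<and> outranked S i (fst (w i) + snd (w i)) w"
    then have S_good: "\<forall>k\<in>S - {i}. fst (w k) \<le> xs" and ?first
      and bad: "\<forall>k\<in>{..<n} - S. xs < fst (w k)"
      and beaten: "m \<le> card {j \<in> {..<n} - S. fst (w j) + snd (w j) < z}"
      unfolding outranked_def z_def[symmetric] others by auto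
    have ?good
    proof (intro set_eqI iffI)
      fix k assume "k \<in> {k. k < n \<and> fst (w k) \<le> xs}"
      then show "k \<in> S" using bad by force
    next
      fix k assume "k \<in> S"
      then show "k \<in> {k. k < n \<and> fst (w k) \<le> xs}"
        using assms R S_good by (cases "k = i") auto
    qed
    with \<open>?first\<close> beaten show "?good \<and> ?first \<and> ?beaten"
      unfolding z_def[symmetric] bad_eq[OF \<open>?good\<close>] by simp
  qed
qed

definition split_space :: "nat \<Rightarrow> ((nat \<Rightarrow> real \<times> real) \<times> (nat \<Rightarrow> real \<times> real)) measure" where
  "split_space i = Pi\<^sub>M {i} (\<lambda>_. lborel \<Otimes>\<^sub>M lborel) \<Otimes>\<^sub>M Pi\<^sub>M ({..<n} - {i}) (\<lambda>_. lborel \<Otimes>\<^sub>M lborel)"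

definition leading_outranked :: "nat set \<Rightarrow> nat \<Rightarrow> ((nat \<Rightarrow> real \<times> real) \<times> (nat \<Rightarrow> real \<times> real)) set" where
  "leading_outranked S i =
     {(u, w) \<in> space (split_space i). fst (u i) \<le> xs \<and> outranked S i (fst (u i) + snd (u i)) w}"

text \<open>The counting condition as a sum of indicators, a form the measurability prover handles.\<close>

lemma outranked_iff_indicator_sum:
  assumes "S \<subseteq> {..<n}" "i \<in> S"
  shows "outranked S i z w \<longleftrightarrow>
    (\<forall>k\<in>{k \<in> S. k < i}. fst (w k) \<le> xs \<and> z < fst (w k) + snd (w k)) \<and>
    (\<forall>k\<in>{k \<in> S. i < k}. fst (w k) \<le> xs \<and> \<not> fst (w k) + snd (w k) < z) \<and>
    (\<forall>k\<in>{..<n} - S. xs < fst (w k)) \<and>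
    real m \<le> (\<Sum>k\<in>{..<n} - S. if fst (w k) + snd (w k) < z then 1 else 0)"
proof -
  have "(\<Sum>k\<in>{..<n} - S. if fst (w k) + snd (w k) < z then 1 else 0 :: real)
      = real (card {k \<in> {..<n} - S. fst (w k) + snd (w k) < z})"
    by (simp add: sum.inter_filter[symmetric])
  then show ?thesis
    using assms by (auto simp: outranked_def mem_regions Ball_def not_less)
qed

lemma sets_leading_outranked:
  assumes S: "S \<subseteq> {..<n}" "i \<in> S"
  shows "leading_outranked S i \<in> sets (split_space i)"
proof -
  define rest where "rest = {..<n} - {i}"
  define P :: "((nat \<Rightarrow> real \<times> real) \<times> (nat \<Rightarrow> real \<times> real)) measure"
    where "P = Pi\<^sub>M {i} (\<lambda>_. lborel \<Otimes>\<^sub>M lborel) \<Otimes>\<^sub>M Pi\<^sub>M rest (\<lambda>_. lborel \<Otimes>\<^sub>M lborel)"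
  define R where "R = {..<n} - S"
  define S1 where "S1 = {k \<in> S. k < i}"
  define S2 where "S2 = {k \<in> S. i < k}"
  have sub: "R \<subseteq> rest" "S1 \<subseteq> rest" "S2 \<subseteq> rest" "finite R" "finite S1" "finite S2"
    using S by (auto simp: rest_def R_def S1_def S2_def intro: finite_subset)
  have [measurable]: "Measurable.pred P (\<lambda>p. fst (fst p i) \<le> xs)"
    unfolding P_def by measurable
  have [measurable]: "Measurable.pred P (\<lambda>p. \<forall>k\<in>S1. fst (snd p k) \<le> xs \<and> fst (fst p i) + snd (fst p i) < fst (snd p k) + snd (snd p k))"
    unfolding P_def by (measurable; use sub in auto)
  have [measurable]: "Measurable.pred P (\<lambda>p. \<forall>k\<in>S2. fst (snd p k) \<le> xs \<and> \<not> fst (snd p k) + snd (snd p k) < fst (fst p i) + snd (fst p i))"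
    unfolding P_def by (measurable; use sub in auto)
  have [measurable]: "Measurable.pred P (\<lambda>p. \<forall>k\<in>R. xs < fst (snd p k))"
    unfolding P_def by (measurable; use sub in auto)
  have [measurable]: "(\<lambda>p. \<Sum>k\<in>R. if fst (snd p k) + snd (snd p k) < fst (fst p i) + snd (fst p i) then 1 else 0 :: real) \<in> borel_measurable P"
    unfolding P_def by (measurable; use sub in auto)
  have "leading_outranked S i = {p \<in> space P. fst (fst p i) \<le> xs \<and>
      (\<forall>k\<in>S1. fst (snd p k) \<le> xs \<and> fst (fst p i) + snd (fst p i) < fst (snd p k) + snd (snd p k)) \<and>
      (\<forall>k\<in>S2. fst (snd p k) \<le> xs \<and> \<not> fst (snd p k) + snd (snd p k) < fst (fst p i) + snd (fst p i)) \<and>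
      (\<forall>k\<in>R. xs < fst (snd p k)) \<and>
      real m \<le> (\<Sum>k\<in>R. if fst (snd p k) + snd (snd p k) < fst (fst p i) + snd (fst p i) then 1 else 0)}"
    unfolding leading_outranked_def split_space_def P_def rest_def outranked_iff_indicator_sum[OF S]
      S1_def S2_def R_def by auto
  also have "\<dots> \<in> sets P"
    by measurable
  finally show ?thesis
    by (simp add: P_def rest_def split_space_def)
qed

definition fail_piece :: "nat set \<Rightarrow> nat \<Rightarrow> 'a set" where
  "fail_piece S i = {\<omega> \<in> space M. {k. k < n \<and> X k \<omega> \<le> xs} = S \<and>
     first_argmin S (\<lambda>k. X k \<omega> + Y k \<omega>) i \<and>
     m \<le> card {j. j < n \<and> xs < X j \<omega> \<and> X j \<omega> + Y j \<omega> < X i \<omega> + Y i \<omega>}}"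

lemma mem_leading_outranked:
  assumes S: "S \<subseteq> {..<n}" "i \<in> S" and "\<omega> \<in> space M" "\<omega>' \<in> space M"
  shows "(restrict (\<lambda>k. V k \<omega>) {i}, restrict (\<lambda>k. V k \<omega>') ({..<n} - {i})) \<in> leading_outranked S i
    \<longleftrightarrow> fst (V i \<omega>) \<le> xs \<and> outranked S i (fst (V i \<omega>) + snd (V i \<omega>)) (\<lambda>k. V k \<omega>')"
proof -
  have "(restrict (\<lambda>k. V k \<omega>) {i}, restrict (\<lambda>k. V k \<omega>') ({..<n} - {i})) \<in> space (split_space i)"
    using assms measurable_space[OF V_measurable] by (auto simp: split_space_def space_pair_measure space_PiM)
  moreover have "outranked S i z (restrict (\<lambda>k. V k \<omega>') ({..<n} - {i})) \<longleftrightarrow> outranked S i z (\<lambda>k. V k \<omega>')" for z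
    using S by (intro outranked_cong) auto
  ultimately show ?thesis
    using S by (auto simp: leading_outranked_def)
qed

lemma fail_piece_eq:
  assumes S: "S \<subseteq> {..<n}" "i \<in> S"
  shows "fail_piece S i = {\<omega> \<in> space M.
    (restrict (\<lambda>k. V k \<omega>) {i}, restrict (\<lambda>k. V k \<omega>) ({..<n} - {i})) \<in> leading_outranked S i}"
  using leading_good_iff_outranked[OF S, of "\<lambda>k. V k \<omega>" for \<omega>] mem_leading_outranked[OF S]
  by (auto simp: fail_piece_def V_def)

lemma fail_piece_in_events:
  assumes S: "S \<subseteq> {..<n}" "i \<in> S"
  shows "fail_piece S i \<in> events"
proof -
  have "(\<lambda>\<omega>. (restrict (\<lambda>k. V k \<omega>) {i}, restrict (\<lambda>k. V k \<omega>) ({..<n} - {i}))) \<in> measurable M (split_space i)"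
    unfolding split_space_def using S by (intro measurable_Pair measurable_restrict V_measurable) auto
  from measurable_sets[OF this sets_leading_outranked[OF S]] show ?thesis
    by (simp add: fail_piece_eq[OF S] vimage_def Int_def conj_commute)
qed

lemma prob_fail_piece:
  assumes S: "S \<subseteq> {..<n}" "i \<in> S" and m: "m \<le> n - card S"
  shows "prob (fail_piece S i)
       = (\<integral>z. prob {\<omega> \<in> space M. outranked S i z (\<lambda>k. V k \<omega>)} * (\<alpha> * f_und z) \<partial>lborel)"
proof -
  define Q where "Q z = prob {\<omega> \<in> space M. outranked S i z (\<lambda>k. V k \<omega>)}" for z
  define U where "U \<omega> = restrict (\<lambda>k. V k \<omega>) {i}" for \<omega>
  define W where "W \<omega> = restrict (\<lambda>k. V k \<omega>) ({..<n} - {i})" for \<omega>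
  have indep_UW: "indep_var (Pi\<^sub>M {i} (\<lambda>_. lborel \<Otimes>\<^sub>M lborel)) U (Pi\<^sub>M ({..<n} - {i}) (\<lambda>_. lborel \<Otimes>\<^sub>M lborel)) W"
    unfolding U_def W_def by (rule indep_var_restrict[OF indep_V]) (use S in auto)
  have Q_borel[measurable]: "Q \<in> borel_measurable borel"
    unfolding Q_def prob_outranked[OF S m] F_Z_gm_def by measurable
  have "emeasure M (fail_piece S i)
      = (\<integral>\<^sup>+\<omega>. emeasure M {\<omega>' \<in> space M. (U \<omega>, W \<omega>') \<in> leading_outranked S i} \<partial>M)"
    using emeasure_indep_var_Pair[OF indep_UW sets_leading_outranked[OF S, unfolded split_space_def]]
    by (simp add: fail_piece_eq[OF S] U_def W_def)
  also have "\<dots> = (\<integral>\<^sup>+\<omega>. (\<lambda>(x, y). indicator {..xs} x * ennreal (Q (x + y))) (V i \<omega>) \<partial>M)"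
  proof (rule nn_integral_cong)
    fix \<omega> assume "\<omega> \<in> space M"
    then have "{\<omega>' \<in> space M. (U \<omega>, W \<omega>') \<in> leading_outranked S i} = (if fst (V i \<omega>) \<le> xs
        then {\<omega>' \<in> space M. outranked S i (fst (V i \<omega>) + snd (V i \<omega>)) (\<lambda>k. V k \<omega>')} else {})"
      using mem_leading_outranked[OF S] by (auto simp: U_def W_def)
    then show "emeasure M {\<omega>' \<in> space M. (U \<omega>, W \<omega>') \<in> leading_outranked S i}
        = (\<lambda>(x, y). indicator {..xs} x * ennreal (Q (x + y))) (V i \<omega>)"
      by (cases "V i \<omega>") (simp add: Q_def emeasure_eq_measure)
  qed
  also have "\<dots> = (\<integral>\<^sup>+(x, y). indicator {..xs} x * ennreal (Q (x + y)) \<partial>pair_law)"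
    using S by (subst distr_V[of i, symmetric], auto, subst nn_integral_distr) auto
  also have "\<dots> = (\<integral>\<^sup>+z. ennreal (Q z * (\<alpha> * f_und z)) \<partial>lborel)"
    by (rule nn_integral_pair_law_lower_density[OF Q_borel]) (simp add: Q_def)
  finally have nn: "(\<integral>\<^sup>+z. ennreal (Q z * (\<alpha> * f_und z)) \<partial>lborel) = ennreal (prob (fail_piece S i))"
    by (simp add: emeasure_eq_measure)
  have nonneg: "AE z in lborel. 0 \<le> Q z * (\<alpha> * f_und z)"
    using \<alpha>_pos by (simp add: Q_def f_Zund_nonneg)
  have "has_bochner_integral lborel (\<lambda>z. Q z * (\<alpha> * f_und z)) (prob (fail_piece S i))"
    using nonneg nn by (intro has_bochner_integral_nn_integral) auto
  then show ?thesis
    by (simp add: Q_def has_bochner_integral_integral_eq)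
qed

lemma fail_piece_empty:
  assumes "n - m < card S"
  shows "fail_piece S i = {}"
proof -
  have "card {j. j < n \<and> xs < X j \<omega> \<and> X j \<omega> + Y j \<omega> < X i \<omega> + Y i \<omega>} < m"
    if "{k. k < n \<and> X k \<omega> \<le> xs} = S" for \<omega>
  proof -
    have "card {j. j < n \<and> xs < X j \<omega> \<and> X j \<omega> + Y j \<omega> < X i \<omega> + Y i \<omega>} \<le> card ({..<n} - S)"
      using that by (intro card_mono) auto
    also have "\<dots> = n - card S"
      using that by (subst card_Diff_subset) auto
    finally show ?thesis
      using assms m_le_n m_pos by linarith
  qed
  then show ?thesis
    by (auto simp: fail_piece_def not_le)
qed

lemma sum_prob_fail_piece:
  assumes S: "S \<subseteq> {..<n}"
  shows "(\<Sum>i\<in>S. prob (fail_piece S i)) =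
    (if 1 \<le> card S \<and> card S \<le> n - m
     then \<alpha> ^ card S * (1 - \<alpha>) ^ (n - card S)
       * (\<integral>z. F_Z_gm n m (card S) fX FY \<alpha> xs z * f_Z1_g (card S) fX fY FY \<alpha> xs z \<partial>lborel)
     else 0)"
proof (cases "1 \<le> card S \<and> card S \<le> n - m")
  case True
  define g where "g = card S"
  have g: "1 \<le> g" "m \<le> n - g"
    using True m_le_n by (auto simp: g_def)
  have "prob (fail_piece S i) = \<alpha> ^ g * (1 - \<alpha>) ^ (n - g)
      * (\<integral>z. F_Z_gm n m g fX FY \<alpha> xs z * ((1 - F_und z) ^ (g - 1) * f_und z) \<partial>lborel)" if "i \<in> S" for i
  proof -
    have "\<alpha> ^ g = \<alpha> ^ (g - 1) * \<alpha>"
      using g by (simp add: power_eq_if)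
    then show ?thesis
      using g unfolding prob_fail_piece[OF S that g(2)[unfolded g_def]] prob_outranked[OF S that g(2)[unfolded g_def]]
      by (simp add: g_def power_mult_distrib mult_ac flip: integral_mult_right_zero)
  qed
  then show ?thesis
    using True by (simp add: f_Z1_g_def g_def mult_ac flip: integral_mult_right_zero)
next
  case False
  moreover have "S = {}" if "card S = 0"
    using S that by (metis card_0_eq finite_lessThan finite_subset)
  ultimately show ?thesis
    using fail_piece_empty by (auto simp: not_le)
qed

lemma all_bad_eq: "{\<omega> \<in> space M. \<forall>k<n. xs < X k \<omega>} = (\<Inter>k\<in>{..<n}. V k -` {(x, y). xs < x} \<inter> space M)"
  using n_pos by (auto simp: V_def)

lemma sets_fst_gt: "{(x, y). xs < x} \<in> sets (lborel \<Otimes>\<^sub>M lborel)"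
  using pred_sets_case_prod[of "\<lambda>x y. xs < x"] by simp

lemma all_bad_in_events: "{\<omega> \<in> space M. \<forall>k<n. xs < X k \<omega>} \<in> events"
proof -
  have "V k -` {(x, y). xs < x} \<inter> space M \<in> events" if "k \<in> {..<n}" for k
    using measurable_sets[OF V_measurable sets_fst_gt] that by simp
  then show ?thesis
    unfolding all_bad_eq using n_pos by (intro sets.finite_INT) blast+
qed

lemma prob_all_bad: "prob {\<omega> \<in> space M. \<forall>k<n. xs < X k \<omega>} = (1 - \<alpha>) ^ n"
proof -
  have "prob {\<omega> \<in> space M. \<forall>k<n. xs < X k \<omega>} = (\<Prod>k\<in>{..<n}. prob (V k -` {(x, y). xs < x} \<inter> space M))"
    unfolding all_bad_eq by (rule indep_varsD_finite[OF indep_V]) (use n_pos sets_fst_gt in auto)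
  also have "\<dots> = (\<Prod>k\<in>{..<n}. measure pair_law {(x, y). xs < x})"
    using sets_fst_gt by (intro prod.cong refl measure_pair_law[symmetric]) auto
  finally show ?thesis
    by (simp add: measure_pair_law_fst_gt)
qed

lemma mem_fail_pieces_iff:
  "\<omega> \<in> (\<Union>(S, i)\<in>Sigma (Pow {..<n}) (\<lambda>S. S). fail_piece S i) \<longleftrightarrow> \<omega> \<in> space M \<and>
    (\<exists>i. first_argmin {k. k < n \<and> X k \<omega> \<le> xs} (\<lambda>k. X k \<omega> + Y k \<omega>) i \<and>
       m \<le> card {j. j < n \<and> xs < X j \<omega> \<and> X j \<omega> + Y j \<omega> < X i \<omega> + Y i \<omega>})"
    (is "_ \<longleftrightarrow> _ \<and> (\<exists>i. ?leads i)")
proof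
  assume "\<omega> \<in> (\<Union>(S, i)\<in>Sigma (Pow {..<n}) (\<lambda>S. S). fail_piece S i)"
  then obtain S i where "\<omega> \<in> fail_piece S i"
    by blast
  then have "\<omega> \<in> space M" "?leads i"
    unfolding fail_piece_def by simp_all
  then show "\<omega> \<in> space M \<and> (\<exists>i. ?leads i)"
    by blast
next
  assume "\<omega> \<in> space M \<and> (\<exists>i. ?leads i)"
  then obtain i where "\<omega> \<in> space M" "?leads i"
    by blast
  moreover have "({k. k < n \<and> X k \<omega> \<le> xs}, i) \<in> Sigma (Pow {..<n}) (\<lambda>S. S)"
    using \<open>?leads i\<close> by (auto simp: first_argmin_def)
  ultimately show "\<omega> \<in> (\<Union>(S, i)\<in>Sigma (Pow {..<n}) (\<lambda>S. S). fail_piece S i)"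
    by (intro UN_I[of "({k. k < n \<and> X k \<omega> \<le> xs}, i)"]) (simp_all add: fail_piece_def)
qed

lemma not_success_eq:
  "{\<omega> \<in> space M. \<not> ord_success n m xs (\<lambda>i. X i \<omega> + Y i \<omega>) (\<lambda>i. X i \<omega>)}
   = {\<omega> \<in> space M. \<forall>k<n. xs < X k \<omega>} \<union> (\<Union>(S, i)\<in>Sigma (Pow {..<n}) (\<lambda>S. S). fail_piece S i)"
  unfolding not_ord_success_iff by (rule set_eqI) (simp only: mem_fail_pieces_iff Un_iff mem_Collect_eq; blast)

lemma finite_fail_piece_index: "finite (Sigma (Pow {..<n}) (\<lambda>S. S))"
  by (rule finite_SigmaI) (auto intro: finite_subset[of _ "{..<n}"])

lemma fail_pieces_in_events: "(\<Union>(S, i)\<in>Sigma (Pow {..<n}) (\<lambda>S. S). fail_piece S i) \<in> events"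
  using finite_fail_piece_index fail_piece_in_events by (intro sets.finite_UN) auto

lemma fail_pieces_disjoint:
  "disjoint_family_on (\<lambda>(S, i). fail_piece S i) (Sigma (Pow {..<n}) (\<lambda>S. S))"
  unfolding disjoint_family_on_def fail_piece_def by (auto dest: first_argmin_unique)

lemma prob_not_success:
  "prob {\<omega> \<in> space M. \<not> ord_success n m xs (\<lambda>i. X i \<omega> + Y i \<omega>) (\<lambda>i. X i \<omega>)}
   = (1 - \<alpha>) ^ n + (\<Sum>g=1..n-m. real (n choose g) * \<alpha> ^ g * (1 - \<alpha>) ^ (n - g)
       * (\<integral>z. F_Z_gm n m g fX FY \<alpha> xs z * f_Z1_g g fX fY FY \<alpha> xs z \<partial>lborel))"
proof -
  define pieces where "pieces = (\<Union>(S, i)\<in>Sigma (Pow {..<n}) (\<lambda>S. S). fail_piece S i)"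
  define weight where "weight g = (if 1 \<le> g \<and> g \<le> n - m
     then \<alpha> ^ g * (1 - \<alpha>) ^ (n - g) * (\<integral>z. F_Z_gm n m g fX FY \<alpha> xs z * f_Z1_g g fX fY FY \<alpha> xs z \<partial>lborel)
     else 0)" for g
  have ev: "(\<lambda>(S, i). fail_piece S i) ` Sigma (Pow {..<n}) (\<lambda>S. S) \<subseteq> events"
    by (auto intro: fail_piece_in_events)
  have "prob pieces = (\<Sum>(S, i)\<in>Sigma (Pow {..<n}) (\<lambda>S. S). prob (fail_piece S i))"
    unfolding pieces_def using finite_measure_finite_Union[OF finite_fail_piece_index ev fail_pieces_disjoint]
    by (simp add: case_prod_beta')
  also have "\<dots> = (\<Sum>S\<in>Pow {..<n}. \<Sum>i\<in>S. prob (fail_piece S i))"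
    by (rule sum.Sigma[symmetric]) (auto intro: finite_subset[of _ "{..<n}"])
  also have "\<dots> = (\<Sum>S | S \<subseteq> {..<n} \<and> True. weight (card S))"
    by (intro sum.cong) (auto simp: sum_prob_fail_piece weight_def)
  also have "\<dots> = (\<Sum>g | g \<le> n \<and> True. real (n choose g) * weight g)"
    using sum_subsets_by_card[where R="{..<n}" and P="\<lambda>_. True" and h=weight] by simp
  also have "\<dots> = (\<Sum>g=1..n-m. real (n choose g) * weight g)"
    by (rule sum.mono_neutral_right) (auto simp: weight_def)
  also have "\<dots> = (\<Sum>g=1..n-m. real (n choose g) * \<alpha> ^ g * (1 - \<alpha>) ^ (n - g)
       * (\<integral>z. F_Z_gm n m g fX FY \<alpha> xs z * f_Z1_g g fX fY FY \<alpha> xs z \<partial>lborel))"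
    by (intro sum.cong refl) (simp add: weight_def mult_ac)
  finally have prob_pieces: "prob pieces = \<dots>" .
  have "{\<omega> \<in> space M. \<forall>k<n. xs < X k \<omega>} \<inter> pieces = {}"
    by (auto simp: pieces_def fail_piece_def)
  then show ?thesis
    unfolding not_success_eq pieces_def[symmetric] using fail_pieces_in_events[folded pieces_def]
    by (simp add: finite_measure_Union all_bad_in_events prob_all_bad prob_pieces)
qed

lemma prob_success:
  "prob {\<omega> \<in> space M. ord_success n m xs (\<lambda>i. X i \<omega> + Y i \<omega>) (\<lambda>i. X i \<omega>)}
   = 1 - (1 - \<alpha>) ^ n - (\<Sum>g=1..n-m. real (n choose g) * \<alpha> ^ g * (1 - \<alpha>) ^ (n - g)
       * (\<integral>z. F_Z_gm n m g fX FY \<alpha> xs z * f_Z1_g g fX fY FY \<alpha> xs z \<partial>lborel))"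
proof -
  have "{\<omega> \<in> space M. ord_success n m xs (\<lambda>i. X i \<omega> + Y i \<omega>) (\<lambda>i. X i \<omega>)}
      = space M - {\<omega> \<in> space M. \<not> ord_success n m xs (\<lambda>i. X i \<omega> + Y i \<omega>) (\<lambda>i. X i \<omega>)}"
    by auto
  moreover have "{\<omega> \<in> space M. \<not> ord_success n m xs (\<lambda>i. X i \<omega> + Y i \<omega>) (\<lambda>i. X i \<omega>)} \<in> events"
    unfolding not_success_eq using all_bad_in_events fail_pieces_in_events by (rule sets.Un)
  ultimately show ?thesis
    by (simp add: prob_compl prob_not_success)
qed

end

theorem mainTheorem2:
  fixes M :: "'a measure" and X Y :: "nat \<Rightarrow> 'a \<Rightarrow> real"
    and fX fY FY :: "real \<Rightarrow> real" and n m :: nat and \<alpha> xs :: real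
  assumes "prob_space M"
    and "1 \<le> m" "m \<le> n"
    and "0 < \<alpha>" "\<alpha> < 1"
    and "prob_space.indep_vars M (\<lambda>_. borel) (case_sum X Y) (Inl ` {..<n} \<union> Inr ` {..<n})"
    and "fX \<in> borel_measurable borel" "\<And>x. 0 \<le> fX x"
    and "fY \<in> borel_measurable borel" "\<And>y. 0 \<le> fY y"
    and "\<And>i. i < n \<Longrightarrow> distributed M lborel (X i) (\<lambda>x. ennreal (fX x))"
    and "\<And>i. i < n \<Longrightarrow> distributed M lborel (Y i) (\<lambda>y. ennreal (fY y))"
    and "\<And>i z. i < n \<Longrightarrow> FY z = measure M {\<omega> \<in> space M. Y i \<omega> \<le> z}"
    and "\<And>i. i < n \<Longrightarrow> measure M {\<omega> \<in> space M. X i \<omega> \<le> xs} = \<alpha>"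
  shows "measure M {\<omega> \<in> space M.
            ord_success n m xs (\<lambda>i. X i \<omega> + Y i \<omega>) (\<lambda>i. X i \<omega>)}
         = 1 - (1 - \<alpha>) ^ n
           - (\<Sum>g=1..n-m. real (n choose g) * \<alpha> ^ g * (1 - \<alpha>) ^ (n - g)
                * (LINT z|lborel. F_Z_gm n m g fX FY \<alpha> xs z * f_Z1_g g fX fY FY \<alpha> xs z))"
proof -
  interpret additive_noise_model M X Y fX fY FY n m \<alpha> xs
    by (intro additive_noise_model.intro additive_noise_model_axioms.intro assms)
  show ?thesis
    by (rule prob_success)
qed

end
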